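(* Let $S\subseteq\mathbb{R}^m$ be a condensed space and let $I\subseteq\mathscr{C}(S)[x_1,\dots,x_n]$ be a condensed ideal. Then $I$ is finitely generated.
   Context: $S\subseteq\mathbb{R}^m$ carries the Euclidean subspace topology; $\mathscr{C}(S)$ is the ring of continuous complex-valued functions on $S$. A polynomial function on $S$ is the restriction to $S$ of a polynomial in the $m$ real coordinates with complex coefficients; $\mathscr{P}(S)$ is the ring of these. A real algebraic subset of $S$ is the common zero set in $S$ of finitely many elements of $\mathscr{P}(S)$. $S$ is condensed if every real algebraic subset $V\subseteq S$ with $V\neq S$ is nowhere dense in $S$. $\mathscr{R}(S)=\{f/g: f,g\in\mathscr{P}(S),\ g \text{ has no zero on } S\}$. An ideal $I\subseteq\mathscr{C}(S)[x_1,\dots,x_n]$ is condensed if it is generated by some elements of $\mathscr{R}(S)[x_1,\dots,x_n]$. *)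

theory Defs
  imports "HOL-Analysis.Analysis" "HOL-Algebra.Ideal" "HOL-Library.Poly_Mapping"
    "HOL-Library.Function_Algebras"
begin

text \<open>Points of S live in real^'m (m = CARD('m)).  Continuous functions on S are
  represented as functions real^'m => complex that vanish outside S, so that two
  representatives agree iff they agree on S.\<close>

definition polyfun :: "((('m::finite) \<Rightarrow>\<^sub>0 nat) \<Rightarrow>\<^sub>0 complex) \<Rightarrow> real^'m \<Rightarrow> complex" where
  "polyfun q x = (\<Sum>a\<in>Poly_Mapping.keys q. Poly_Mapping.lookup q a * (\<Prod>i\<in>UNIV. (complex_of_real (x $ i)) ^ Poly_Mapping.lookup a i))"

definition real_algebraic_subset :: "(real^'m::finite) set \<Rightarrow> (real^'m) set \<Rightarrow> bool" where
  "real_algebraic_subset S V \<longleftrightarrow>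
     (\<exists>F. finite F \<and> V = {x\<in>S. \<forall>q\<in>F. polyfun q x = 0})"

definition condensed :: "(real^'m::finite) set \<Rightarrow> bool" where
  "condensed S \<longleftrightarrow>
     (\<forall>V. real_algebraic_subset S V \<and> V \<noteq> S \<longrightarrow>
        (top_of_set S) interior_of ((top_of_set S) closure_of V) = {})"

definition cont_fun_on :: "(real^'m::finite) set \<Rightarrow> (real^'m \<Rightarrow> complex) \<Rightarrow> bool" where
  "cont_fun_on S f \<longleftrightarrow> continuous_on S f \<and> (\<forall>x. x \<notin> S \<longrightarrow> f x = 0)"

definition regular_fun_on :: "(real^'m::finite) set \<Rightarrow> (real^'m \<Rightarrow> complex) \<Rightarrow> bool" where
  "regular_fun_on S f \<longleftrightarrow>
     (\<exists>p q. (\<forall>x\<in>S. polyfun q x \<noteq> 0) \<and>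
            (\<forall>x. f x = (if x \<in> S then polyfun p x / polyfun q x else 0)))"

text \<open>Polynomials in the variables x_0,...,x_{n-1} with coefficients in C(S).\<close>
type_synonym 'm cpoly = "((nat \<Rightarrow>\<^sub>0 nat) \<Rightarrow>\<^sub>0 (real^'m \<Rightarrow> complex))"

definition CS_polys :: "(real^'m::finite) set \<Rightarrow> nat \<Rightarrow> 'm cpoly set" where
  "CS_polys S n = {P. (\<forall>\<alpha>\<in>Poly_Mapping.keys P. Poly_Mapping.keys \<alpha> \<subseteq> {..<n}) \<and> (\<forall>\<alpha>. cont_fun_on S (Poly_Mapping.lookup P \<alpha>))}"

definition CS_poly_ring :: "(real^'m::finite) set \<Rightarrow> nat \<Rightarrow> 'm cpoly ring" where
  "CS_poly_ring S n =
     \<lparr>carrier = CS_polys S n, monoid.mult = (\<lambda>P Q. P * Q),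
      one = Poly_Mapping.single 0 (\<lambda>x. if x \<in> S then 1 else 0),
      zero = 0, add = (\<lambda>P Q. P + Q)\<rparr>"

definition RS_polys :: "(real^'m::finite) set \<Rightarrow> nat \<Rightarrow> 'm cpoly set" where
  "RS_polys S n = {P \<in> CS_polys S n. \<forall>\<alpha>. regular_fun_on S (Poly_Mapping.lookup P \<alpha>)}"

definition condensed_ideal :: "(real^'m::finite) set \<Rightarrow> nat \<Rightarrow> 'm cpoly set \<Rightarrow> bool" where
  "condensed_ideal S n I \<longleftrightarrow>
     ideal I (CS_poly_ring S n) \<and> (\<exists>G \<subseteq> RS_polys S n. I = genideal (CS_poly_ring S n) G)"

end

theory Submission
  imports Defs "HOL-Computational_Algebra.Polynomial"
begin

text \<open>
  Clearing denominators, each generator \<open>P\<close> of \<open>I\<close> with coefficients in \<open>R(S)\<close> can be written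
  \<open>P = w T\<close> with \<open>w\<close> a unit on \<open>S\<close> and \<open>T\<close> a polynomial whose coefficients are polynomial
  functions, i.e. an element of \<open>\<complex>[y\<^sub>1,\<dots>,y\<^sub>m,x\<^sub>1,\<dots>,x\<^sub>n]\<close> (not restricted to \<open>S\<close>).
  That ring is Noetherian by Hilbert's basis theorem, applied once per adjoined variable.
  Hence finitely many of the \<open>T\<close> span all of them, and the corresponding generators already
  generate \<open>I\<close>.
\<close>

definition is_subring :: "'a::comm_ring_1 set \<Rightarrow> bool" where
  "is_subring A \<longleftrightarrow> 0 \<in> A \<and> 1 \<in> A \<and> (\<forall>x\<in>A. \<forall>y\<in>A. x + y \<in> A \<and> x * y \<in> A \<and> - x \<in> A)"

lemma is_subringD:
  assumes "is_subring A"
  shows subring_zero: "0 \<in> A" and subring_one: "1 \<in> A"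
    and subring_add: "x \<in> A \<Longrightarrow> y \<in> A \<Longrightarrow> x + y \<in> A"
    and subring_mult: "x \<in> A \<Longrightarrow> y \<in> A \<Longrightarrow> x * y \<in> A"
    and subring_uminus: "x \<in> A \<Longrightarrow> - x \<in> A"
  using assms unfolding is_subring_def by blast+

lemma subring_UNIV: "is_subring UNIV"
  unfolding is_subring_def by simp

lemma subring_sum: "is_subring A \<Longrightarrow> (\<And>i. i \<in> I \<Longrightarrow> f i \<in> A) \<Longrightarrow> sum f I \<in> A"
  by (induction I rule: infinite_finite_induct) (auto intro: subring_zero subring_add)

lemma subring_prod: "is_subring A \<Longrightarrow> (\<And>i. i \<in> I \<Longrightarrow> f i \<in> A) \<Longrightarrow> prod f I \<in> A"
  by (induction I rule: infinite_finite_induct) (auto intro: subring_one subring_mult)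

lemma subring_power: "is_subring A \<Longrightarrow> x \<in> A \<Longrightarrow> x ^ k \<in> A"
  by (induction k) (auto intro: subring_one subring_mult)

inductive_set lin_span :: "'a::comm_ring_1 set \<Rightarrow> 'a set \<Rightarrow> 'a set" for A F where
  lin_span_zero: "0 \<in> lin_span A F"
| lin_span_step: "a \<in> A \<Longrightarrow> f \<in> F \<Longrightarrow> x \<in> lin_span A F \<Longrightarrow> a * f + x \<in> lin_span A F"

lemma lin_span_add: "x \<in> lin_span A F \<Longrightarrow> y \<in> lin_span A F \<Longrightarrow> x + y \<in> lin_span A F"
  by (induction rule: lin_span.induct) (auto simp: add.assoc intro: lin_span_step)

lemma lin_span_mult:
  assumes "is_subring A" "b \<in> A" "x \<in> lin_span A F"
  shows "b * x \<in> lin_span A F"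
  using assms(3) by induction
    (auto simp: distrib_left mult.assoc[symmetric] intro: lin_span.intros subring_mult assms)

lemma lin_span_diff:
  assumes "is_subring A" "x \<in> lin_span A F" "y \<in> lin_span A F"
  shows "x - y \<in> lin_span A F"
  using lin_span_add[OF assms(2) lin_span_mult[OF assms(1) _ assms(3), of "- 1"]]
    subring_uminus[OF assms(1) subring_one[OF assms(1)]] by simp

lemma lin_span_base: "is_subring A \<Longrightarrow> f \<in> F \<Longrightarrow> f \<in> lin_span A F"
  using lin_span_step[OF _ _ lin_span_zero, of 1 A f F] by (simp add: subring_one)

lemma lin_span_mono: "F \<subseteq> H \<Longrightarrow> lin_span A F \<subseteq> lin_span A H"
proof
  show "x \<in> lin_span A H" if "F \<subseteq> H" "x \<in> lin_span A F" for x
    using that(2,1) by induction (auto intro: lin_span.intros)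
qed

lemma lin_span_subset: "F \<subseteq> A \<Longrightarrow> is_subring A \<Longrightarrow> lin_span A F \<subseteq> A"
proof
  show "x \<in> A" if "F \<subseteq> A" "is_subring A" "x \<in> lin_span A F" for x
    using that(3,1,2) by induction (auto intro: subring_zero subring_add subring_mult)
qed

lemma lin_span_trans:
  assumes "is_subring A" "H \<subseteq> lin_span A F"
  shows "lin_span A H \<subseteq> lin_span A F"
proof
  show "x \<in> lin_span A F" if "x \<in> lin_span A H" for x
    using that by induction (use assms in \<open>auto intro: lin_span_zero lin_span_add lin_span_mult\<close>)
qed

lemma lin_span_finite_support:
  "x \<in> lin_span A F \<Longrightarrow> \<exists>F'. finite F' \<and> F' \<subseteq> F \<and> x \<in> lin_span A F'"
proof (induction rule: lin_span.induct)
  case (lin_span_step a f x)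
  then obtain F' where "finite F'" "F' \<subseteq> F" "x \<in> lin_span A F'" by blast
  then show ?case using lin_span_mono[of F' "insert f F'" A] lin_span_step(1,2)
    by (intro exI[of _ "insert f F'"]) (auto intro: lin_span.intros)
qed (auto intro: lin_span_zero)

lemma lin_span_finite_generators:
  assumes "is_subring A" "finite H" "H \<subseteq> lin_span A G"
  obtains F where "finite F" "F \<subseteq> G" "lin_span A H \<subseteq> lin_span A F"
proof -
  obtain \<phi> where \<phi>: "\<And>h. h \<in> H \<Longrightarrow> finite (\<phi> h) \<and> \<phi> h \<subseteq> G \<and> h \<in> lin_span A (\<phi> h)"
    using lin_span_finite_support assms(3) by (metis subsetD)
  have "H \<subseteq> lin_span A (\<Union> (\<phi> ` H))"
    using \<phi> lin_span_mono[of _ "\<Union> (\<phi> ` H)" A] by blast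
  then show ?thesis
    using that[of "\<Union> (\<phi> ` H)"] \<phi> assms(2) lin_span_trans[OF assms(1)] by auto
qed

section \<open>Noetherian subrings and Hilbert's basis theorem\<close>

definition noetherian :: "'a::comm_ring_1 set \<Rightarrow> bool" where
  "noetherian A \<longleftrightarrow> (\<forall>G \<subseteq> A. \<exists>F \<subseteq> G. finite F \<and> G \<subseteq> lin_span A F)"

lemma noetherian_field: "noetherian (UNIV :: 'a::field set)"
  unfolding noetherian_def
proof (intro allI impI)
  fix G :: "'a set"
  show "\<exists>F \<subseteq> G. finite F \<and> G \<subseteq> lin_span UNIV F"
  proof (cases "G \<subseteq> {0}")
    case True
    then show ?thesis by (auto intro: lin_span_zero)
  next
    case False
    then obtain g0 where "g0 \<in> G" "g0 \<noteq> 0" by blast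
    then have "g \<in> lin_span UNIV {g0}" for g
      using lin_span_step[OF _ _ lin_span_zero, of "g / g0" UNIV g0 "{g0}"] by simp
    with \<open>g0 \<in> G\<close> show ?thesis by (intro exI[of _ "{g0}"]) auto
  qed
qed

definition is_ring_hom :: "('a::comm_ring_1 \<Rightarrow> 'b::comm_ring_1) \<Rightarrow> bool" where
  "is_ring_hom h \<longleftrightarrow> h 1 = 1 \<and> (\<forall>x y. h (x + y) = h x + h y \<and> h (x * y) = h x * h y)"

lemma is_ring_homD:
  assumes "is_ring_hom h"
  shows is_ring_hom_one: "h 1 = 1" and is_ring_hom_add: "h (x + y) = h x + h y"
    and is_ring_hom_mult: "h (x * y) = h x * h y"
    and is_ring_hom_zero: "h 0 = 0" and is_ring_hom_uminus: "h (- x) = - h x"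
proof -
  show one: "h 1 = 1" and add: "\<And>x y. h (x + y) = h x + h y" and "h (x * y) = h x * h y"
    using assms unfolding is_ring_hom_def by blast+
  show zero: "h 0 = 0" using add[of 0 0] by simp
  show "h (- x) = - h x"
    using add.inverse_unique[of "h x" "h (- x)"] add[of x "- x"] zero by simp
qed

lemma subring_image:
  assumes "is_subring A" "is_ring_hom h"
  shows "is_subring (h ` A)"
  unfolding is_subring_def
proof (intro conjI ballI)
  show "0 \<in> h ` A" "1 \<in> h ` A"
    using is_ring_hom_zero[OF assms(2)] is_ring_hom_one[OF assms(2)] subring_zero[OF assms(1)]
      subring_one[OF assms(1)] by (metis image_eqI)+
  fix x y assume "x \<in> h ` A" "y \<in> h ` A"
  then obtain a b where "a \<in> A" "b \<in> A" "x = h a" "y = h b" by blast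
  then show "x + y \<in> h ` A" "x * y \<in> h ` A" "- x \<in> h ` A"
    using assms by (auto simp flip: is_ring_hom_add is_ring_hom_mult is_ring_hom_uminus
      intro: subring_add subring_mult subring_uminus)
qed

lemma noetherian_image:
  assumes "noetherian A" "is_ring_hom h"
  shows "noetherian (h ` A)"
  unfolding noetherian_def
proof (intro allI impI)
  fix G assume G: "G \<subseteq> h ` A"
  obtain F' where F': "F' \<subseteq> {a \<in> A. h a \<in> G}" "finite F'" "{a \<in> A. h a \<in> G} \<subseteq> lin_span A F'"
    using assms(1) unfolding noetherian_def by (metis (no_types, lifting) mem_Collect_eq subsetI)
  have h_span: "h x \<in> lin_span (h ` A) (h ` F')" if "x \<in> lin_span A F'" for x
    using that by induction
      (auto simp: is_ring_hom_zero[OF assms(2)] is_ring_hom_add[OF assms(2)] is_ring_hom_mult[OF assms(2)]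
        intro: lin_span.intros)
  show "\<exists>F \<subseteq> G. finite F \<and> G \<subseteq> lin_span (h ` A) F"
    using F' G h_span by (intro exI[of _ "h ` F'"]) blast
qed

lemma is_ring_hom_const_fun: "is_ring_hom (\<lambda>c. \<lambda>_::'a. c :: 'b::comm_ring_1)"
  unfolding is_ring_hom_def by (simp add: plus_fun_def times_fun_def one_fun_def)

definition poly_over :: "'a::comm_ring_1 set \<Rightarrow> 'a poly set" where
  "poly_over A = {p. \<forall>i. coeff p i \<in> A}"

lemma subring_poly_over: "is_subring A \<Longrightarrow> is_subring (poly_over A)"
  unfolding is_subring_def poly_over_def
  by (simp add: coeff_mult coeff_1 subring_sum[unfolded is_subring_def]) blast

lemma monom_poly_over: "is_subring A \<Longrightarrow> a \<in> A \<Longrightarrow> monom a k \<in> poly_over A"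
  unfolding poly_over_def by (auto simp: coeff_monom subring_zero)

lemma greedy_sequence:
  fixes \<mu> :: "'a \<Rightarrow> nat" and span_of :: "'a set \<Rightarrow> 'a set"
  assumes "\<And>H. finite H \<Longrightarrow> H \<subseteq> J \<Longrightarrow> \<exists>g\<in>J. g \<notin> span_of H"
  shows "\<exists>f :: nat \<Rightarrow> 'a. (\<forall>k. f k \<in> J) \<and> (\<forall>k. f k \<notin> span_of (f ` {..<k})) \<and>
    (\<forall>k g. g \<in> J \<and> g \<notin> span_of (f ` {..<k}) \<longrightarrow> \<mu> (f k) \<le> \<mu> g)"
proof -
  define pick where "pick H = arg_min \<mu> (\<lambda>g. g \<in> J \<and> g \<notin> span_of H)" for H
  define prefix where "prefix = rec_nat [] (\<lambda>_ l. l @ [pick (set l)])"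
  define f where "f k = pick (set (prefix k))" for k
  have "prefix 0 = []" "prefix (Suc k) = prefix k @ [f k]" for k
    by (simp_all add: prefix_def f_def)
  then have set_prefix: "set (prefix k) = f ` {..<k}" for k
    by (induction k) (simp_all add: lessThan_Suc)
  have f: "f k = arg_min \<mu> (\<lambda>g. g \<in> J \<and> g \<notin> span_of (f ` {..<k}))" for k
    by (simp only: f_def[of k] set_prefix pick_def)
  have "f k \<in> J \<and> f k \<notin> span_of (f ` {..<k}) \<and>
      (\<forall>g. g \<in> J \<and> g \<notin> span_of (f ` {..<k}) \<longrightarrow> \<mu> (f k) \<le> \<mu> g)" for k
  proof (induction k rule: less_induct)
    case (less k)
    have "f ` {..<k} \<subseteq> J"
      using less by blast
    then obtain g where "g \<in> J \<and> g \<notin> span_of (f ` {..<k})"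
      using assms[of "f ` {..<k}"] by auto
    then show ?case
      unfolding f[of k] conj_assoc[symmetric] by (rule arg_min_nat_lemma)
  qed
  then show ?thesis by blast
qed

lemma noetherian_sequence:
  fixes a :: "nat \<Rightarrow> 'a::comm_ring_1"
  assumes "noetherian A" "range a \<subseteq> A"
  obtains N where "a N \<in> lin_span A (a ` {..<N})"
proof -
  obtain F where F: "F \<subseteq> range a" "finite F" "range a \<subseteq> lin_span A F"
    using assms(1)[unfolded noetherian_def, rule_format, OF assms(2)] by blast
  obtain K where K: "finite K" "F = a ` K"
    using finite_subset_image[OF F(2,1)] by blast
  define N where "N = Suc (Max (insert 0 K))"
  have "F \<subseteq> a ` {..<N}"
    unfolding K(2) N_def using K(1) by (auto simp: less_Suc_eq_le)
  then have "a N \<in> lin_span A (a ` {..<N})"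
    using F(3) lin_span_mono by blast
  then show ?thesis by (rule that)
qed

lemma lin_span_lead_coeffs_lift:
  assumes "is_subring A" "\<And>h. h \<in> H \<Longrightarrow> degree h \<le> d" "c \<in> lin_span A (lead_coeff ` H)"
  shows "\<exists>r \<in> lin_span (poly_over A) H. coeff r d = c \<and> (\<forall>i>d. coeff r i = 0)"
  using assms(3)
proof induction
  case lin_span_zero
  show ?case by (intro bexI[of _ 0] lin_span.lin_span_zero) simp_all
next
  case (lin_span_step a f x)
  then obtain h r where h: "h \<in> H" "f = lead_coeff h"
    and r: "r \<in> lin_span (poly_over A) H" "coeff r d = x" "\<forall>i>d. coeff r i = 0" by blast
  have "h \<in> H \<Longrightarrow> i > d \<Longrightarrow> coeff h (i - (d - degree h)) = 0" for i
    using assms(2)[of h] by (intro coeff_eq_0) linarith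
  moreover have "monom a (d - degree h) * h + r \<in> lin_span (poly_over A) H"
    using h r lin_span_step(1) by (intro lin_span.lin_span_step monom_poly_over assms(1))
  ultimately show ?case using h r assms(2)[of h]
    by (intro bexI[of _ "monom a (d - degree h) * h + r"]) (auto simp: coeff_monom_mult)
qed

lemma lin_span_poly_over_reduce_degree:
  assumes A: "is_subring A"
    and f: "f \<in> lin_span (poly_over A) G" "f \<notin> lin_span (poly_over A) H"
    and H: "H \<subseteq> lin_span (poly_over A) G" "\<And>h. h \<in> H \<Longrightarrow> degree h \<le> degree f"
    and lead: "lead_coeff f \<in> lin_span A (lead_coeff ` H)"
  shows "\<exists>g \<in> lin_span (poly_over A) G. g \<notin> lin_span (poly_over A) H \<and> degree g < degree f"
proof -
  let ?P = "poly_over A"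
  have P: "is_subring ?P" by (rule subring_poly_over[OF A])
  obtain r where r: "r \<in> lin_span ?P H" "coeff r (degree f) = lead_coeff f"
    "\<And>i. i > degree f \<Longrightarrow> coeff r i = 0"
    using lin_span_lead_coeffs_lift[OF A H(2) lead] by blast
  define g where "g = f - r"
  have "r \<in> lin_span ?P G"
    using r(1) lin_span_trans[OF P H(1)] by blast
  then have "g \<in> lin_span ?P G" unfolding g_def using f(1) by (rule lin_span_diff[OF P, rotated])
  moreover have g_new: "g \<notin> lin_span ?P H"
    using f(2) lin_span_add[OF _ r(1)] unfolding g_def by fastforce
  moreover have "degree g < degree f"
  proof (rule ccontr)
    have "coeff g i = 0" if "i \<ge> degree f" for i
      using that r(2,3) coeff_eq_0[of f i] unfolding g_def by (cases "i = degree f") auto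
    moreover assume "\<not> degree g < degree f"
    ultimately have "coeff g (degree g) = 0" by simp
    moreover have "g \<noteq> 0" using g_new lin_span_zero by metis
    ultimately show False by simp
  qed
  ultimately show ?thesis by blast
qed

text \<open>
  Sarges' argument: pick elements of least degree outside the span of the previous ones; their
  leading coefficients become dependent, and cancelling a leading term yields an element of
  smaller degree outside that span.
\<close>

lemma lin_span_poly_over_finitely_generated:
  assumes A: "is_subring A" "noetherian A" and G: "G \<subseteq> poly_over A"
  shows "\<exists>H. finite H \<and> H \<subseteq> lin_span (poly_over A) G \<and>
    lin_span (poly_over A) G \<subseteq> lin_span (poly_over A) H"
proof (rule ccontr)
  let ?P = "poly_over A"
  let ?J = "lin_span ?P G"
  assume no_basis: "\<not> ?thesis"
  have "\<exists>g\<in>?J. g \<notin> lin_span ?P H" if "finite H" "H \<subseteq> ?J" for H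
    using no_basis that by auto
  from greedy_sequence[where J = ?J and span_of = "lin_span ?P" and \<mu> = degree, OF this]
  obtain f :: "nat \<Rightarrow> 'a poly" where "\<forall>k. f k \<in> ?J" "\<forall>k. f k \<notin> lin_span ?P (f ` {..<k})"
    "\<forall>k g. g \<in> ?J \<and> g \<notin> lin_span ?P (f ` {..<k}) \<longrightarrow> degree (f k) \<le> degree g"
    by blast
  then have f: "\<And>k. f k \<in> ?J" "\<And>k. f k \<notin> lin_span ?P (f ` {..<k})"
    and f_min: "\<And>k g. g \<in> ?J \<Longrightarrow> g \<notin> lin_span ?P (f ` {..<k}) \<Longrightarrow> degree (f k) \<le> degree g"
    by simp_all
  have "range (\<lambda>k. lead_coeff (f k)) \<subseteq> A"
    using f(1) lin_span_subset[OF G subring_poly_over[OF A(1)]] unfolding poly_over_def by blast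
  then obtain N where "lead_coeff (f N) \<in> lin_span A ((\<lambda>k. lead_coeff (f k)) ` {..<N})"
    by (rule noetherian_sequence[OF A(2)])
  then have N: "lead_coeff (f N) \<in> lin_span A (lead_coeff ` f ` {..<N})"
    by (simp only: image_image)
  have "degree (f k) \<le> degree (f N)" if "k < N" for k
  proof (rule f_min[OF f(1)])
    have "lin_span ?P (f ` {..<k}) \<subseteq> lin_span ?P (f ` {..<N})"
      using that by (intro lin_span_mono image_mono) auto
    then show "f N \<notin> lin_span ?P (f ` {..<k})" using f(2)[of N] by blast
  qed
  then obtain g where "g \<in> ?J" "g \<notin> lin_span ?P (f ` {..<N})" "degree g < degree (f N)"
    using lin_span_poly_over_reduce_degree[OF A(1) f(1,2) _ _ N] f(1) by blast
  with f_min[of g N] show False by simp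
qed

theorem noetherian_poly_over:
  assumes "is_subring A" "noetherian A"
  shows "noetherian (poly_over A)"
  unfolding noetherian_def
proof (intro allI impI)
  fix G assume G: "G \<subseteq> poly_over A"
  have P: "is_subring (poly_over A)" by (rule subring_poly_over[OF assms(1)])
  obtain H where H: "finite H" "H \<subseteq> lin_span (poly_over A) G"
    "lin_span (poly_over A) G \<subseteq> lin_span (poly_over A) H"
    using lin_span_poly_over_finitely_generated[OF assms G] by blast
  obtain F where "finite F" "F \<subseteq> G" "lin_span (poly_over A) H \<subseteq> lin_span (poly_over A) F"
    by (rule lin_span_finite_generators[OF P H(1,2)])
  then show "\<exists>F \<subseteq> G. finite F \<and> G \<subseteq> lin_span (poly_over A) F"
    using H(3) lin_span_base[OF P] by blast
qed

section \<open>Adjoining finitely many elements\<close>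

definition adjoin :: "'a::comm_ring_1 set \<Rightarrow> 'a \<Rightarrow> 'a set" where
  "adjoin A z = (\<lambda>p. poly p z) ` poly_over A"

lemma is_ring_hom_poly: "is_ring_hom (\<lambda>p. poly p z)"
  unfolding is_ring_hom_def by simp

lemma subring_adjoin: "is_subring A \<Longrightarrow> is_subring (adjoin A z)"
  unfolding adjoin_def by (intro subring_image subring_poly_over is_ring_hom_poly)

lemma noetherian_adjoin: "is_subring A \<Longrightarrow> noetherian A \<Longrightarrow> noetherian (adjoin A z)"
  unfolding adjoin_def by (intro noetherian_image noetherian_poly_over is_ring_hom_poly)

lemma adjoin_superset:
  assumes "is_subring A"
  shows "A \<subseteq> adjoin A z" "z \<in> adjoin A z"
proof -
  have "[:a:] \<in> poly_over A" if "a \<in> A" for a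
    using that subring_zero[OF assms] by (auto simp: poly_over_def coeff_pCons split: nat.split)
  then show "A \<subseteq> adjoin A z" unfolding adjoin_def by force
  have "[:0, 1:] \<in> poly_over A"
    using subring_zero[OF assms] subring_one[OF assms]
    by (auto simp: poly_over_def coeff_pCons split: nat.split)
  then show "z \<in> adjoin A z" unfolding adjoin_def by force
qed

lemma adjoin_subset:
  assumes "is_subring M" "A \<subseteq> M" "z \<in> M"
  shows "adjoin A z \<subseteq> M"
proof
  fix x assume "x \<in> adjoin A z"
  then obtain p where "p \<in> poly_over A" "x = poly p z" unfolding adjoin_def by blast
  then show "x \<in> M"
    using assms unfolding poly_altdef poly_over_def
    by (auto intro!: subring_sum subring_mult subring_power)
qed

lemma finitely_adjoined_noetherian:
  assumes "is_subring A" "noetherian A" "finite Z"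
  shows "\<exists>B. is_subring B \<and> noetherian B \<and> A \<subseteq> B \<and> Z \<subseteq> B \<and>
    (\<forall>M. is_subring M \<and> A \<subseteq> M \<and> Z \<subseteq> M \<longrightarrow> B \<subseteq> M)"
  using assms(3)
proof (induction Z rule: finite_induct)
  case empty
  show ?case using assms(1,2) by blast
next
  case (insert z Z)
  then obtain B where B: "is_subring B" "noetherian B" "A \<subseteq> B" "Z \<subseteq> B"
    "\<forall>M. is_subring M \<and> A \<subseteq> M \<and> Z \<subseteq> M \<longrightarrow> B \<subseteq> M"
    by blast
  have "is_subring (adjoin B z)" "noetherian (adjoin B z)"
    using B(1,2) by (auto intro: subring_adjoin noetherian_adjoin)
  moreover have "A \<subseteq> adjoin B z" "insert z Z \<subseteq> adjoin B z"
    using adjoin_superset[OF B(1), of z] B(3,4) by auto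
  moreover have "adjoin B z \<subseteq> M" if "is_subring M" "A \<subseteq> M" "insert z Z \<subseteq> M" for M
    using that B(5) by (intro adjoin_subset) auto
  ultimately show ?case by blast
qed

section \<open>Polynomial functions and common denominators\<close>

inductive_set poly_funs :: "(real^'m::finite \<Rightarrow> complex) set" where
  poly_funs_const: "(\<lambda>_. c) \<in> poly_funs"
| poly_funs_coord: "(\<lambda>x. complex_of_real (x $ i)) \<in> poly_funs"
| poly_funs_add: "f \<in> poly_funs \<Longrightarrow> g \<in> poly_funs \<Longrightarrow> (\<lambda>x. f x + g x) \<in> poly_funs"
| poly_funs_mult: "f \<in> poly_funs \<Longrightarrow> g \<in> poly_funs \<Longrightarrow> (\<lambda>x. f x * g x) \<in> poly_funs"

lemma poly_funs_sum: "(\<And>a. a \<in> A \<Longrightarrow> f a \<in> poly_funs) \<Longrightarrow> (\<lambda>x. \<Sum>a\<in>A. f a x) \<in> poly_funs"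
  by (induction A rule: infinite_finite_induct) (auto intro: poly_funs.intros)

lemma poly_funs_prod: "(\<And>a. a \<in> A \<Longrightarrow> f a \<in> poly_funs) \<Longrightarrow> (\<lambda>x. \<Prod>a\<in>A. f a x) \<in> poly_funs"
  by (induction A rule: infinite_finite_induct) (auto intro: poly_funs.intros)

lemma poly_funs_power: "f \<in> poly_funs \<Longrightarrow> (\<lambda>x. f x ^ k) \<in> poly_funs"
  by (induction k) (auto intro: poly_funs.intros)

lemma polyfun_in_poly_funs: "polyfun q \<in> poly_funs"
  unfolding polyfun_def[abs_def]
  by (intro poly_funs_sum poly_funs_mult poly_funs_const poly_funs_prod poly_funs_power poly_funs_coord)

lemma continuous_on_poly_funs: "f \<in> poly_funs \<Longrightarrow> continuous_on A f"
  by (induction rule: poly_funs.induct)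
    (auto intro!: continuous_on_add continuous_on_mult continuous_on_of_real continuous_on_component)

lemma common_denominator:
  assumes "finite K" "\<And>\<alpha>. \<alpha> \<in> K \<Longrightarrow> regular_fun_on S (f \<alpha>)"
  shows "\<exists>D N. D \<in> poly_funs \<and> (\<forall>x\<in>S. D x \<noteq> 0) \<and> (\<forall>\<alpha>. N \<alpha> \<in> poly_funs) \<and>
    (\<forall>\<alpha>\<in>K. \<forall>x\<in>S. f \<alpha> x = N \<alpha> x / D x)"
  using assms
proof (induction K rule: finite_induct)
  case empty
  show ?case by (intro exI[of _ "\<lambda>_. 1"] exI[of _ "\<lambda>_ _. 0"]) (auto intro: poly_funs_const)
next
  case (insert \<beta> K)
  then obtain D N where D: "D \<in> poly_funs" "\<forall>x\<in>S. D x \<noteq> 0" "\<forall>\<alpha>. N \<alpha> \<in> poly_funs"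
    "\<forall>\<alpha>\<in>K. \<forall>x\<in>S. f \<alpha> x = N \<alpha> x / D x" by (metis insertCI)
  obtain p q where pq: "\<forall>x\<in>S. polyfun q x \<noteq> 0"
    "\<forall>x. f \<beta> x = (if x \<in> S then polyfun p x / polyfun q x else 0)"
    using insert.prems[of \<beta>] unfolding regular_fun_on_def by blast
  define N' where "N' \<alpha> = (if \<alpha> = \<beta> then (\<lambda>x. polyfun p x * D x) else (\<lambda>x. N \<alpha> x * polyfun q x))"
    for \<alpha>
  have "N' \<alpha> \<in> poly_funs" for \<alpha>
    unfolding N'_def using D(1,3) by (auto intro: poly_funs_mult polyfun_in_poly_funs)
  moreover have "f \<alpha> x = N' \<alpha> x / (D x * polyfun q x)" if "\<alpha> \<in> insert \<beta> K" "x \<in> S" for \<alpha> x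
    using that D(2,4) pq unfolding N'_def by auto
  ultimately show ?case using D(1,2) pq(1)
    by (intro exI[of _ "\<lambda>x. D x * polyfun q x"] exI[of _ N']) (auto intro: poly_funs_mult polyfun_in_poly_funs)
qed

section \<open>A Noetherian subring of \<open>C(S)[x]\<close>\<close>

lemma poly_mapping_sum_single:
  fixes f :: "'a \<Rightarrow>\<^sub>0 'b::comm_monoid_add"
  shows "f = (\<Sum>k\<in>Poly_Mapping.keys f. Poly_Mapping.single k (Poly_Mapping.lookup f k))"
proof (rule poly_mapping_eqI)
  fix a
  show "Poly_Mapping.lookup f a =
      Poly_Mapping.lookup (\<Sum>k\<in>Poly_Mapping.keys f. Poly_Mapping.single k (Poly_Mapping.lookup f k)) a"
    by (simp add: lookup_sum lookup_single when_def sum.delta' in_keys_iff)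
qed

lemma single_sum_one:
  "finite J \<Longrightarrow> Poly_Mapping.single (\<Sum>j\<in>J. g j) (1::'b::comm_semiring_1)
     = (\<Prod>j\<in>J. Poly_Mapping.single (g j) 1 :: 'a::comm_monoid_add \<Rightarrow>\<^sub>0 'b)"
proof (induction J rule: finite_induct)
  case (insert j J)
  then show ?case by (simp add: insert.IH[symmetric] mult_single)
qed simp

lemma single_single_power:
  "Poly_Mapping.single (Poly_Mapping.single j 1) (1::'b::comm_semiring_1) ^ k
     = Poly_Mapping.single (Poly_Mapping.single j k) 1"
proof (induction k)
  case (Suc k)
  have "Poly_Mapping.single j (Suc k) = Poly_Mapping.single j 1 + Poly_Mapping.single j k"
    by (simp add: single_add[symmetric])
  then show ?case using Suc by (simp add: mult_single)
qed simp

lemma single_monomial_eq_prod: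
  "Poly_Mapping.single \<alpha> (1::'b::comm_semiring_1) =
     (\<Prod>j\<in>Poly_Mapping.keys \<alpha>. Poly_Mapping.single (Poly_Mapping.single j 1) 1 ^ Poly_Mapping.lookup \<alpha> j)"
  unfolding single_single_power
  by (subst poly_mapping_sum_single[of \<alpha>]) (rule single_sum_one, simp)

lemma lookup_single_zero_mult:
  fixes c :: "'b::comm_semiring_1"
  shows "Poly_Mapping.lookup (Poly_Mapping.single (0::'a::comm_monoid_add) c * Q) a
         = c * Poly_Mapping.lookup Q a"
  by (simp add: lookup_mult lookup_single when_mult mult_when Sum_any_right_distrib)

lemma is_ring_hom_single_zero:
  "is_ring_hom (Poly_Mapping.single (0::'a::comm_monoid_add) :: 'b::comm_ring_1 \<Rightarrow> 'a \<Rightarrow>\<^sub>0 'b)"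
  unfolding is_ring_hom_def by (simp add: single_add mult_single)

text \<open>
  The unit of \<open>C(S)[x]\<close>. Multiplying by it restricts all coefficients to \<open>S\<close>, so
  \<open>indicator_poly S * a \<in> CS_polys S n\<close> says that \<open>a\<close> becomes an element of \<open>C(S)[x]\<close> on \<open>S\<close>.
\<close>

definition indicator_poly :: "(real^'m::finite) set \<Rightarrow> 'm cpoly" where
  "indicator_poly S = Poly_Mapping.single 0 (\<lambda>x. if x \<in> S then 1 else 0)"

lemma CS_poly_ring_simps [simp]:
  "carrier (CS_poly_ring S n) = CS_polys S n"
  "P \<otimes>\<^bsub>CS_poly_ring S n\<^esub> Q = P * Q"
  "P \<oplus>\<^bsub>CS_poly_ring S n\<^esub> Q = P + Q"
  "\<one>\<^bsub>CS_poly_ring S n\<^esub> = indicator_poly S"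
  "\<zero>\<^bsub>CS_poly_ring S n\<^esub> = 0"
  by (simp_all add: CS_poly_ring_def indicator_poly_def)

lemma single_in_CS_polys:
  assumes "Poly_Mapping.keys \<alpha> \<subseteq> {..<n}" "continuous_on S \<phi>" "\<And>x. x \<notin> S \<Longrightarrow> \<phi> x = 0"
  shows "Poly_Mapping.single \<alpha> \<phi> \<in> CS_polys S n"
  unfolding CS_polys_def cont_fun_on_def
  using assms by (auto simp: lookup_single when_def)

lemma indicator_poly_mult_single:
  assumes "Poly_Mapping.keys \<alpha> \<subseteq> {..<n}" "continuous_on S \<phi>"
  shows "indicator_poly S * Poly_Mapping.single \<alpha> \<phi> \<in> CS_polys S n"
proof -
  have "indicator_poly S * Poly_Mapping.single \<alpha> \<phi> =
      Poly_Mapping.single \<alpha> (\<lambda>x. if x \<in> S then \<phi> x else 0)"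
    by (auto simp: indicator_poly_def mult_single times_fun_def
        intro!: arg_cong[where f = "Poly_Mapping.single \<alpha>"])
  also have "\<dots> \<in> CS_polys S n"
    using assms by (intro single_in_CS_polys) (auto intro: continuous_on_eq)
  finally show ?thesis .
qed

lemma indicator_poly_mult_CS_polys:
  assumes "ring (CS_poly_ring S n)" "P \<in> CS_polys S n"
  shows "indicator_poly S * P = P"
proof -
  interpret R: ring "CS_poly_ring S n" by (fact assms(1))
  show ?thesis using R.l_one[of P] assms(2) by simp
qed

lemma CS_polys_ring_closed:
  assumes "ring (CS_poly_ring S n)" "P \<in> CS_polys S n" "Q \<in> CS_polys S n"
  shows "P + Q \<in> CS_polys S n" "P * Q \<in> CS_polys S n" "- P \<in> CS_polys S n"
proof -
  interpret R: ring "CS_poly_ring S n" by (fact assms(1))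
  show "P + Q \<in> CS_polys S n" "P * Q \<in> CS_polys S n"
    using R.a_closed R.m_closed assms(2,3) by simp_all
  have "P + \<ominus>\<^bsub>CS_poly_ring S n\<^esub> P = 0" using R.r_neg assms(2) by simp
  then have "- P = \<ominus>\<^bsub>CS_poly_ring S n\<^esub> P" by (rule add.inverse_unique)
  then show "- P \<in> CS_polys S n" using R.a_inv_closed assms(2) by simp
qed

lemma subring_restrict_to_CS_polys:
  assumes "ring (CS_poly_ring S n)"
  shows "is_subring {a. indicator_poly S * a \<in> CS_polys S n}"
proof -
  let ?e = "indicator_poly S"
  interpret R: ring "CS_poly_ring S n" by (fact assms)
  have e: "?e \<in> CS_polys S n" using R.one_closed by simp
  have ee: "?e * ?e = ?e" by (rule indicator_poly_mult_CS_polys[OF assms e])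
  have "(?e * a) * (?e * b) = (?e * ?e) * (a * b)" for a b
    by (simp only: mult_ac)
  then have "?e * (a * b) = (?e * a) * (?e * b)" for a b
    by (simp only: ee)
  moreover have "0 \<in> CS_polys S n" using R.zero_closed by simp
  ultimately show ?thesis
    unfolding is_subring_def using CS_polys_ring_closed[OF assms] e
    by (simp add: distrib_left)
qed

definition const_polys :: "'m cpoly set" where
  "const_polys = Poly_Mapping.single 0 ` (\<lambda>c _. c) ` UNIV"

definition coordinate_polys :: "nat \<Rightarrow> ('m::finite) cpoly set" where
  "coordinate_polys n = (\<lambda>j. Poly_Mapping.single (Poly_Mapping.single j 1) 1) ` {..<n} \<union>
     range (\<lambda>i. Poly_Mapping.single 0 (\<lambda>x. complex_of_real (x $ i)))"

lemma subring_const_polys: "is_subring const_polys"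
  unfolding const_polys_def
  by (intro subring_image subring_UNIV is_ring_hom_single_zero is_ring_hom_const_fun)

lemma noetherian_const_polys: "noetherian const_polys"
  unfolding const_polys_def
  by (intro noetherian_image noetherian_field is_ring_hom_single_zero is_ring_hom_const_fun)

lemma single_poly_funs_in_subring:
  fixes B :: "'m::finite cpoly set"
  assumes B: "is_subring B" "const_polys \<subseteq> B" "coordinate_polys n \<subseteq> B"
    and "Poly_Mapping.keys \<alpha> \<subseteq> {..<n}" "\<phi> \<in> poly_funs"
  shows "Poly_Mapping.single \<alpha> \<phi> \<in> B"
proof -
  have "Poly_Mapping.single 0 \<phi> \<in> B"
    using assms(5)
  proof induction
    case (poly_funs_add f g)
    have "(Poly_Mapping.single 0 (\<lambda>x. f x + g x) :: 'm cpoly) =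
        Poly_Mapping.single 0 f + Poly_Mapping.single 0 g"
      by (simp add: single_add[symmetric] plus_fun_def)
    then show ?case using subring_add[OF B(1) poly_funs_add.IH] by (simp only:)
  next
    case (poly_funs_mult f g)
    have "(Poly_Mapping.single 0 (\<lambda>x. f x * g x) :: 'm cpoly) =
        Poly_Mapping.single 0 f * Poly_Mapping.single 0 g"
      by (simp add: mult_single times_fun_def)
    then show ?case using subring_mult[OF B(1) poly_funs_mult.IH] by (simp only:)
  next
    case (poly_funs_const c)
    then show ?case using B(2) unfolding const_polys_def by blast
  next
    case (poly_funs_coord i)
    then show ?case using B(3) unfolding coordinate_polys_def by blast
  qed
  moreover have "Poly_Mapping.single \<alpha> 1 \<in> B"
    using B(1,3) assms(4) unfolding coordinate_polys_def
    by (subst single_monomial_eq_prod) (auto intro!: subring_prod subring_power)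
  moreover have "Poly_Mapping.single \<alpha> \<phi> = Poly_Mapping.single \<alpha> 1 * Poly_Mapping.single 0 \<phi>"
    by (simp add: mult_single)
  ultimately show ?thesis
    using subring_mult[OF B(1)] by simp
qed

text \<open>\<open>B\<close> is \<open>\<complex>[y\<^sub>1,\<dots>,y\<^sub>m,x\<^sub>1,\<dots>,x\<^sub>n]\<close>, the ring generated by \<open>const_polys\<close> and \<open>coordinate_polys n\<close>.\<close>

lemma exists_noetherian_polynomial_subring:
  assumes "ring (CS_poly_ring S n)"
  shows "\<exists>B :: 'm::finite cpoly set. is_subring B \<and> noetherian B \<and>
    (\<forall>\<alpha> \<phi>. Poly_Mapping.keys \<alpha> \<subseteq> {..<n} \<longrightarrow> \<phi> \<in> poly_funs \<longrightarrow> Poly_Mapping.single \<alpha> \<phi> \<in> B) \<and>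
    (\<forall>b\<in>B. indicator_poly S * b \<in> CS_polys S n)"
proof -
  have "finite (coordinate_polys n :: 'm cpoly set)"
    unfolding coordinate_polys_def by simp
  then obtain B :: "'m cpoly set" where B: "is_subring B" "noetherian B"
    "const_polys \<subseteq> B" "coordinate_polys n \<subseteq> B"
    "\<forall>M. is_subring M \<and> const_polys \<subseteq> M \<and> coordinate_polys n \<subseteq> M \<longrightarrow> B \<subseteq> M"
    using finitely_adjoined_noetherian[OF subring_const_polys noetherian_const_polys] by blast
  have "const_polys \<subseteq> {a. indicator_poly S * a \<in> CS_polys S n}"
    "coordinate_polys n \<subseteq> {a. indicator_poly S * a \<in> CS_polys S n}"
    unfolding const_polys_def coordinate_polys_def
    by (auto intro!: indicator_poly_mult_single continuous_on_of_real continuous_on_component)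
  then have "\<forall>b\<in>B. indicator_poly S * b \<in> CS_polys S n"
    using B(5) subring_restrict_to_CS_polys[OF assms] by blast
  then show ?thesis using B(1-4) single_poly_funs_in_subring by blast
qed

section \<open>Clearing denominators\<close>

lemma clear_denominators:
  fixes B :: "'m::finite cpoly set"
  assumes P: "P \<in> RS_polys S n" and B: "is_subring B"
    "\<And>\<alpha> \<phi>. Poly_Mapping.keys \<alpha> \<subseteq> {..<n} \<Longrightarrow> \<phi> \<in> poly_funs \<Longrightarrow> Poly_Mapping.single \<alpha> \<phi> \<in> B"
  shows "\<exists>T\<in>B. \<exists>w\<in>CS_polys S n. \<exists>v\<in>CS_polys S n. P = w * T \<and> indicator_poly S * T = v * P"
proof -
  let ?K = "Poly_Mapping.keys P"
  have PC: "P \<in> CS_polys S n" using P unfolding RS_polys_def by blast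
  have "\<exists>D N. D \<in> poly_funs \<and> (\<forall>x\<in>S. D x \<noteq> 0) \<and> (\<forall>\<alpha>. N \<alpha> \<in> poly_funs) \<and>
      (\<forall>\<alpha>\<in>?K. \<forall>x\<in>S. Poly_Mapping.lookup P \<alpha> x = N \<alpha> x / D x)"
    using P unfolding RS_polys_def by (intro common_denominator) auto
  then obtain D N where D: "D \<in> poly_funs" "\<forall>x\<in>S. D x \<noteq> 0" "\<forall>\<alpha>. N \<alpha> \<in> poly_funs"
    "\<forall>\<alpha>\<in>?K. \<forall>x\<in>S. Poly_Mapping.lookup P \<alpha> x = N \<alpha> x / D x"
    by blast
  \<comment> \<open>\<open>T = D P\<close> on \<open>S\<close>, and \<open>w\<close>, \<open>v\<close> are \<open>1/D\<close> and \<open>D\<close> restricted to \<open>S\<close>\<close>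
  define T where "T = (\<Sum>\<alpha>\<in>?K. Poly_Mapping.single \<alpha> (N \<alpha>))"
  define w :: "'m cpoly" where "w = Poly_Mapping.single 0 (\<lambda>x. if x \<in> S then 1 / D x else 0)"
  define v :: "'m cpoly" where "v = Poly_Mapping.single 0 (\<lambda>x. if x \<in> S then D x else 0)"
  have lookup_T: "Poly_Mapping.lookup T \<alpha> = (if \<alpha> \<in> ?K then N \<alpha> else 0)" for \<alpha>
    by (simp add: T_def lookup_sum lookup_single when_def sum.delta')
  have P_zero: "Poly_Mapping.lookup P \<alpha> x = 0" if "\<alpha> \<notin> ?K \<or> x \<notin> S" for \<alpha> x
    using that PC unfolding CS_polys_def cont_fun_on_def by (auto simp: in_keys_iff)
  have "P = w * T"
  proof (rule poly_mapping_eqI, rule ext)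
    show "Poly_Mapping.lookup P \<alpha> x = Poly_Mapping.lookup (w * T) \<alpha> x" for \<alpha> x
      using P_zero[of \<alpha> x] D(4) by (auto simp: w_def lookup_single_zero_mult lookup_T)
  qed
  moreover have "indicator_poly S * T = v * P"
  proof (rule poly_mapping_eqI, rule ext)
    show "Poly_Mapping.lookup (indicator_poly S * T) \<alpha> x = Poly_Mapping.lookup (v * P) \<alpha> x" for \<alpha> x
      using P_zero[of \<alpha> x] D(2,4)
      by (auto simp: indicator_poly_def v_def lookup_single_zero_mult lookup_T)
  qed
  moreover have "T \<in> B"
    unfolding T_def using PC D(3) unfolding CS_polys_def
    by (intro subring_sum[OF B(1)] B(2)) auto
  moreover have "w \<in> CS_polys S n" "v \<in> CS_polys S n"
    unfolding w_def v_def using continuous_on_poly_funs[OF D(1)] D(2)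
    by (auto intro!: single_in_CS_polys continuous_on_divide continuous_on_const
        intro: continuous_on_eq)
  ultimately show ?thesis by blast
qed

lemma indicator_poly_mult_lin_span_in_ideal:
  assumes R: "ring (CS_poly_ring S n)" and J: "ideal J (CS_poly_ring S n)"
    and B: "\<forall>b\<in>B. indicator_poly S * b \<in> CS_polys S n"
    and H: "\<forall>h\<in>H. indicator_poly S * h \<in> J"
    and t: "t \<in> lin_span B H"
  shows "indicator_poly S * t \<in> J"
proof -
  interpret J: ideal J "CS_poly_ring S n" by (fact J)
  let ?e = "indicator_poly S"
  have ee: "?e * ?e = ?e"
    using indicator_poly_mult_CS_polys[OF R] J.one_closed by simp
  show ?thesis
    using t
  proof induction
    case lin_span_zero
    show ?case using additive_subgroup.zero_closed[OF J.is_additive_subgroup] by simp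
  next
    case (lin_span_step a h x)
    have "?e * (a * h + x) = (?e * a) * (?e * h) + ?e * x"
      using ee by (simp add: distrib_left mult_ac)
    moreover have "(?e * a) * (?e * h) \<in> J"
      using J.I_l_closed[of "?e * h" "?e * a"] lin_span_step(1,2) B H by simp
    ultimately show ?case
      using additive_subgroup.a_closed[OF J.is_additive_subgroup] lin_span_step.IH by simp
  qed
qed

lemma cleared_in_ideal:
  assumes R: "ring (CS_poly_ring S n)" and J: "ideal J (CS_poly_ring S n)"
    and "w \<in> CS_polys S n" "P = w * T" "indicator_poly S * T \<in> J"
  shows "P \<in> J"
proof -
  have "w * (indicator_poly S * T) = (indicator_poly S * w) * T"
    by (simp only: mult_ac)
  then have "P = w * (indicator_poly S * T)"
    using assms(3,4) indicator_poly_mult_CS_polys[OF R] by simp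
  then show ?thesis
    using ideal.I_l_closed[OF J assms(5), of w] assms(3) by simp
qed

lemma genideal_RS_polys_finitely_generated:
  assumes R: "ring (CS_poly_ring S n)" and G: "G \<subseteq> RS_polys S n"
  shows "\<exists>F. finite F \<and> F \<subseteq> G \<and> genideal (CS_poly_ring S n) G = genideal (CS_poly_ring S n) F"
proof -
  interpret R: ring "CS_poly_ring S n" by (fact R)
  let ?e = "indicator_poly S"
  obtain B :: "'a cpoly set" where B: "is_subring B" "noetherian B"
    "\<forall>\<alpha> \<phi>. Poly_Mapping.keys \<alpha> \<subseteq> {..<n} \<longrightarrow> \<phi> \<in> poly_funs \<longrightarrow> Poly_Mapping.single \<alpha> \<phi> \<in> B"
    "\<forall>b\<in>B. ?e * b \<in> CS_polys S n"
    using exists_noetherian_polynomial_subring[OF R] by blast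
  have "\<forall>P\<in>G. \<exists>T\<in>B. \<exists>w\<in>CS_polys S n. \<exists>v\<in>CS_polys S n. P = w * T \<and> ?e * T = v * P"
  proof
    fix P assume "P \<in> G"
    then show "\<exists>T\<in>B. \<exists>w\<in>CS_polys S n. \<exists>v\<in>CS_polys S n. P = w * T \<and> ?e * T = v * P"
      using G B(3) by (intro clear_denominators[OF _ B(1)]) auto
  qed
  then obtain T w v where cleared: "\<And>P. P \<in> G \<Longrightarrow> T P \<in> B \<and> w P \<in> CS_polys S n \<and>
      v P \<in> CS_polys S n \<and> P = w P * T P \<and> ?e * T P = v P * P"
    by metis
  then obtain F'' where "F'' \<subseteq> T ` G" "finite F''" "T ` G \<subseteq> lin_span B F''"
    using B(2) unfolding noetherian_def by (metis image_subsetI)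
  then obtain F where F: "F \<subseteq> G" "finite F" "T ` G \<subseteq> lin_span B (T ` F)"
    by (metis finite_subset_image)
  have GC: "G \<subseteq> carrier (CS_poly_ring S n)" using G unfolding RS_polys_def by auto
  let ?J = "genideal (CS_poly_ring S n) F"
  have J: "ideal ?J (CS_poly_ring S n)" "F \<subseteq> ?J"
    using R.genideal_ideal R.genideal_self F(1) GC by auto
  have "\<forall>h\<in>T ` F. ?e * h \<in> ?J"
    using cleared F(1) J(2) ideal.I_l_closed[OF J(1)] by fastforce
  then have e_T: "?e * T P \<in> ?J" if "P \<in> G" for P
    using F(3) that by (intro indicator_poly_mult_lin_span_in_ideal[OF R J(1) B(4), of "T ` F"]) auto
  have "P \<in> ?J" if "P \<in> G" for P
  proof (rule cleared_in_ideal[OF R J(1)])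
    show "w P \<in> CS_polys S n" "P = w P * T P" using cleared[OF that] by auto
    show "?e * T P \<in> ?J" using that by (rule e_T)
  qed
  then have "G \<subseteq> ?J" by blast
  then have "genideal (CS_poly_ring S n) G = ?J"
    using R.genideal_minimal[OF J(1)] R.genideal_minimal[OF R.genideal_ideal[OF GC]]
      R.genideal_self[OF GC] F(1) by blast
  then show ?thesis using F(1,2) by blast
qed

theorem mainTheorem5:
  fixes S :: "(real^'m::finite) set" and n :: nat and I :: "'m cpoly set"
  assumes "condensed S"
    and "condensed_ideal S n I"
  shows "\<exists>F. finite F \<and> F \<subseteq> I \<and> I = genideal (CS_poly_ring S n) F"
proof -
  obtain G where I: "ideal I (CS_poly_ring S n)" and G: "G \<subseteq> RS_polys S n"
    and IG: "I = genideal (CS_poly_ring S n) G"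
    using assms(2) unfolding condensed_ideal_def by blast
  have R: "ring (CS_poly_ring S n)" using I by (rule ideal.axioms(2))
  obtain F where "finite F" "F \<subseteq> G" "I = genideal (CS_poly_ring S n) F"
    using genideal_RS_polys_finitely_generated[OF R G] IG by blast
  moreover have "G \<subseteq> I"
    unfolding IG using G by (intro ring.genideal_self[OF R]) (auto simp: RS_polys_def)
  ultimately show ?thesis by blast
qed

end
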